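(* Let $\sigma(u)=1/(1+e^{-u})$, $\sigma_\tau(u)=\sigma(u/\tau)$ for $\tau>0$, let $z$ be a standard logistic random variable, $\eta\in\mathbb{R}$, and $\mathcal L:[0,1]\to\mathbb{R}$ continuously differentiable. Let $\hat G_\tau=\frac{d}{d\eta}\mathcal L(\sigma_\tau(\eta-z))$ be the Gumbel-Softmax gradient estimator. Then $\mathrm{Var}_z(\hat G_\tau)=O(1/\tau)$ as $\tau\to0^+$. *)

theory Defs
  imports "HOL-Probability.Probability" "HOL-Library.Landau_Symbols"
begin

definition sigmoid :: "real \<Rightarrow> real" where
  "sigmoid u = 1 / (1 + exp (- u))"

definition sigmoid_temp :: "real \<Rightarrow> real \<Rightarrow> real" where
  "sigmoid_temp \<tau> u = sigmoid (u / \<tau>)"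

definition logistic_pdf :: "real \<Rightarrow> real" where
  "logistic_pdf z = exp (- z) / (1 + exp (- z))\<^sup>2"

definition logistic_measure :: "real measure" where
  "logistic_measure = density lborel (\<lambda>z. ennreal (logistic_pdf z))"

definition gs_estimator :: "(real \<Rightarrow> real) \<Rightarrow> real \<Rightarrow> real \<Rightarrow> real \<Rightarrow> real" where
  "gs_estimator L \<tau> \<eta> z = deriv (\<lambda>e. L (sigmoid_temp \<tau> (e - z))) \<eta>"

definition variance_under :: "real measure \<Rightarrow> (real \<Rightarrow> real) \<Rightarrow> real" where
  "variance_under M X = (LINT z|M. (X z - (LINT w|M. X w))\<^sup>2)"

end

theory Submission
  imports Defs "HOL-Real_Asymp.Real_Asymp"
begin

text \<open>Writing \<open>p\<close> for the logistic density, the chain rule gives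
  \<open>G\<^sub>\<tau>(z) = L'(\<sigma>((\<eta> - z)/\<tau>)) p((\<eta> - z)/\<tau>) / \<tau>\<close>, so \<open>|G\<^sub>\<tau>(z)| \<le> (B/\<tau>) p((\<eta> - z)/\<tau>)\<close>
  with \<open>B = max |L'|\<close> on \<open>[0,1]\<close>. Since \<open>p \<le> 1/4\<close>, the variance is at most the second moment
  \<open>\<integral> p(z) G\<^sub>\<tau>(z)\<^sup>2 dz \<le> (B\<^sup>2/16\<tau>\<^sup>2) \<integral> p((\<eta> - z)/\<tau>) dz = B\<^sup>2/(16\<tau>)\<close>.\<close>

lemma one_plus_exp_neq_0 [simp]: "1 + exp x \<noteq> (0::real)"
  using exp_gt_zero[of x] by linarith

lemma sigmoid_has_real_derivative: "(sigmoid has_real_derivative logistic_pdf u) (at u)"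
  unfolding sigmoid_def logistic_pdf_def
  by (auto intro!: derivative_eq_intros simp: power2_eq_square)

lemma sigmoid_in_unit_interval: "sigmoid u \<in> {0..1}"
  unfolding sigmoid_def by (simp add: add_pos_pos)

lemma continuous_on_sigmoid: "continuous_on A sigmoid"
  unfolding sigmoid_def by (intro continuous_intros) auto

lemma logistic_pdf_nonneg: "0 \<le> logistic_pdf u"
  unfolding logistic_pdf_def by simp

lemma logistic_pdf_le_quarter: "logistic_pdf u \<le> 1/4"
proof -
  have "4 * exp (-u) \<le> (1 + exp (-u))\<^sup>2"
    using zero_le_power2[of "exp (-u) - 1"] by (simp add: power2_eq_square algebra_simps)
  then show ?thesis
    unfolding logistic_pdf_def by (simp add: pos_divide_le_eq add_pos_pos)
qed

lemma isCont_logistic_pdf: "isCont logistic_pdf u"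
  unfolding logistic_pdf_def by (intro continuous_intros) auto

lemma continuous_on_logistic_pdf: "continuous_on A logistic_pdf"
  by (simp add: continuous_at_imp_continuous_on isCont_logistic_pdf)

lemma logistic_pdf_minus: "logistic_pdf (- z) = logistic_pdf z"
  unfolding logistic_pdf_def using one_plus_exp_neq_0[of z] one_plus_exp_neq_0[of "-z"]
  by (simp add: exp_minus field_simps power2_eq_square)

lemma borel_measurable_logistic_pdf [measurable]: "logistic_pdf \<in> borel_measurable borel"
  using continuous_on_logistic_pdf by (rule borel_measurable_continuous_onI)

text \<open>\<open>z \<mapsto> - \<tau> \<sigma>((a - z)/\<tau>)\<close> is an antiderivative with limits \<open>-\<tau>\<close> and \<open>0\<close> at \<open>-\<infinity>\<close> and \<open>+\<infinity>\<close>.\<close>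

lemma has_bochner_integral_logistic_pdf_scaled:
  assumes "0 < \<tau>"
  shows "has_bochner_integral lborel (\<lambda>z. logistic_pdf ((a - z) / \<tau>)) \<tau>"
proof -
  let ?F = "\<lambda>z. - \<tau> * sigmoid ((a - z) / \<tau>)"
  let ?f = "\<lambda>z. logistic_pdf ((a - z) / \<tau>)"
  have deriv: "(?F has_real_derivative ?f z) (at z)" for z
    using assms by (auto intro!: derivative_eq_intros DERIV_chain2[OF sigmoid_has_real_derivative])
  have cont: "isCont ?f z" for z
    using assms by (intro continuous_intros isCont_o2[OF _ isCont_logistic_pdf]) auto
  have "(?F \<longlongrightarrow> 0) at_top" "(?F \<longlongrightarrow> -\<tau>) at_bot"
    using assms unfolding sigmoid_def by real_asymp+
  then have "set_integrable lborel (einterval (-\<infinity>) \<infinity>) ?f \<and>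
      (LBINT z=-\<infinity>..\<infinity>. ?f z) = 0 - - \<tau>"
    using deriv cont logistic_pdf_nonneg
    by (intro conjI interval_integral_FTC_nonneg[where F = ?F and A = "-\<tau>" and B = 0])
       (auto simp: ereal_tendsto_simps1)
  then show ?thesis
    by (simp add: has_bochner_integral_iff set_integrable_def interval_lebesgue_integral_def
        set_lebesgue_integral_def)
qed

lemma prob_space_logistic_measure: "prob_space logistic_measure"
proof (rule prob_spaceI)
  have int: "has_bochner_integral lborel logistic_pdf 1"
    using has_bochner_integral_logistic_pdf_scaled[of 1 0] by (simp add: logistic_pdf_minus)
  have "emeasure logistic_measure (space logistic_measure) = (\<integral>\<^sup>+ z. logistic_pdf z \<partial>lborel)"
    unfolding logistic_measure_def by (simp add: emeasure_density)
  also have "\<dots> = 1"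
    using int logistic_pdf_nonneg
    by (subst nn_integral_eq_integral) (auto simp: has_bochner_integral_iff)
  finally show "emeasure logistic_measure (space logistic_measure) = 1" .
qed

lemma variance_under_nonneg: "0 \<le> variance_under M X"
  unfolding variance_under_def by (rule integral_nonneg_AE) simp

lemma variance_under_le_second_moment:
  assumes "prob_space M" "integrable M X" "integrable M (\<lambda>z. (X z)\<^sup>2)"
  shows "variance_under M X \<le> (LINT z|M. (X z)\<^sup>2)"
proof -
  interpret prob_space M by fact
  have "variance_under M X = expectation (\<lambda>z. (X z)\<^sup>2) - (expectation X)\<^sup>2"
    unfolding variance_under_def using assms(2,3) by (rule variance_eq)
  then show ?thesis by simp
qed

lemma variance_logistic_le_of_dominated:
  assumes "0 < \<tau>" "0 \<le> C" and f_meas: "f \<in> borel_measurable borel"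
    and f_le: "\<And>z. \<bar>f z\<bar> \<le> C * logistic_pdf ((a - z) / \<tau>)"
  shows "variance_under logistic_measure f \<le> C\<^sup>2 * \<tau> / 16"
proof -
  interpret prob_space logistic_measure by (rule prob_space_logistic_measure)
  have meas: "f \<in> borel_measurable logistic_measure"
    using f_meas by (simp add: logistic_measure_def)
  have f_bound: "\<bar>f z\<bar> \<le> C / 4" for z
    using f_le[of z] mult_left_mono[OF logistic_pdf_le_quarter \<open>0 \<le> C\<close>, of "(a - z) / \<tau>"]
    by linarith
  have f_int: "integrable logistic_measure f"
    using meas f_bound by (intro integrable_const_bound[where B = "C / 4"]) auto
  have f2_bound: "(f z)\<^sup>2 \<le> (C / 4)\<^sup>2" for z
    using power_mono[OF f_bound[of z] abs_ge_zero, of 2] by simp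
  have f2_int: "integrable logistic_measure (\<lambda>z. (f z)\<^sup>2)"
    using meas f2_bound by (intro integrable_const_bound[where B = "(C / 4)\<^sup>2"]) auto
  have pointwise: "logistic_pdf z * (f z)\<^sup>2 \<le> C\<^sup>2 / 16 * logistic_pdf ((a - z) / \<tau>)" for z
  proof -
    let ?q = "logistic_pdf ((a - z) / \<tau>)"
    have "(f z)\<^sup>2 \<le> (C * ?q)\<^sup>2"
      using f_le[of z] abs_le_square_iff[of "f z" "C * ?q"] \<open>0 \<le> C\<close> logistic_pdf_nonneg by simp
    also have "\<dots> = C\<^sup>2 * ?q * ?q" by (simp add: power2_eq_square)
    also have "\<dots> \<le> C\<^sup>2 / 4 * ?q"
      using mult_left_mono[OF logistic_pdf_le_quarter, of "C\<^sup>2 * ?q"] logistic_pdf_nonneg by simp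
    finally have "(f z)\<^sup>2 \<le> C\<^sup>2 / 4 * ?q" .
    from mult_mono[OF logistic_pdf_le_quarter this] show ?thesis
      using logistic_pdf_nonneg by simp
  qed
  have "variance_under logistic_measure f \<le> (LINT z|logistic_measure. (f z)\<^sup>2)"
    using prob_space_logistic_measure f_int f2_int by (rule variance_under_le_second_moment)
  also have "\<dots> = (LINT z|lborel. logistic_pdf z * (f z)\<^sup>2)"
    unfolding logistic_measure_def using f_meas logistic_pdf_nonneg
    by (subst integral_density) auto
  also have "\<dots> \<le> (LINT z|lborel. C\<^sup>2 / 16 * logistic_pdf ((a - z) / \<tau>))"
    using has_bochner_integral_logistic_pdf_scaled[OF \<open>0 < \<tau>\<close>] pointwise logistic_pdf_nonneg
    by (intro integral_mono') (auto simp: has_bochner_integral_iff)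
  also have "\<dots> = C\<^sup>2 * \<tau> / 16"
    using has_bochner_integral_logistic_pdf_scaled[OF \<open>0 < \<tau>\<close>, of a]
    by (simp add: has_bochner_integral_iff)
  finally show ?thesis .
qed

lemma gs_estimator_eq:
  assumes "0 < \<tau>" and L_deriv: "\<And>s. s \<in> {0<..<1} \<Longrightarrow> (L has_real_derivative L' s) (at s)"
  shows "gs_estimator L \<tau> \<eta> z =
    L' (sigmoid ((\<eta> - z) / \<tau>)) * logistic_pdf ((\<eta> - z) / \<tau>) / \<tau>"
proof -
  have "((\<lambda>e. sigmoid ((e - z) / \<tau>)) has_real_derivative
      logistic_pdf ((\<eta> - z) / \<tau>) * (1 / \<tau>)) (at \<eta>)"
    by (rule DERIV_chain2[OF sigmoid_has_real_derivative])
       (use assms(1) in \<open>auto intro!: derivative_eq_intros\<close>)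
  moreover have "sigmoid ((\<eta> - z) / \<tau>) \<in> {0<..<1}"
    unfolding sigmoid_def by (simp add: add_pos_pos)
  ultimately have "((\<lambda>e. L (sigmoid ((e - z) / \<tau>))) has_real_derivative
      L' (sigmoid ((\<eta> - z) / \<tau>)) * (logistic_pdf ((\<eta> - z) / \<tau>) * (1 / \<tau>))) (at \<eta>)"
    by (intro DERIV_chain2[OF L_deriv])
  then show ?thesis
    unfolding gs_estimator_def sigmoid_temp_def by (simp add: DERIV_imp_deriv)
qed

lemma variance_gs_estimator_le:
  assumes "0 < \<tau>"
    and L_deriv: "\<And>s. s \<in> {0<..<1} \<Longrightarrow> (L has_real_derivative L' s) (at s)"
    and L'_cont: "continuous_on {0..1} L'" and L'_bound: "\<And>x. x \<in> {0..1} \<Longrightarrow> \<bar>L' x\<bar> \<le> B"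
  shows "variance_under logistic_measure (gs_estimator L \<tau> \<eta>) \<le> B\<^sup>2 / 16 * (1 / \<tau>)"
proof -
  have B: "0 \<le> B" using L'_bound[of 0] by simp
  have G_eq: "gs_estimator L \<tau> \<eta> =
      (\<lambda>z. L' (sigmoid ((\<eta> - z) / \<tau>)) * logistic_pdf ((\<eta> - z) / \<tau>) / \<tau>)"
    using gs_estimator_eq[OF assms(1,2)] by blast
  have "continuous_on UNIV (gs_estimator L \<tau> \<eta>)"
    unfolding G_eq using assms(1) sigmoid_in_unit_interval
    by (intro continuous_intros continuous_on_compose2[OF L'_cont]
          continuous_on_compose2[OF continuous_on_logistic_pdf]
          continuous_on_compose2[OF continuous_on_sigmoid]) auto
  then have G_meas: "gs_estimator L \<tau> \<eta> \<in> borel_measurable borel"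
    by (rule borel_measurable_continuous_onI)
  have "\<bar>gs_estimator L \<tau> \<eta> z\<bar> \<le> B / \<tau> * logistic_pdf ((\<eta> - z) / \<tau>)" for z
    unfolding G_eq using assms(1) L'_bound[OF sigmoid_in_unit_interval] logistic_pdf_nonneg
    by (simp add: abs_mult divide_right_mono mult_right_mono)
  then have "variance_under logistic_measure (gs_estimator L \<tau> \<eta>) \<le> (B / \<tau>)\<^sup>2 * \<tau> / 16"
    using assms(1) B G_meas by (intro variance_logistic_le_of_dominated) auto
  also have "\<dots> = B\<^sup>2 / 16 * (1 / \<tau>)"
    using assms(1) by (simp add: power2_eq_square)
  finally show ?thesis .
qed

theorem propositionE4:
  fixes L L' :: "real \<Rightarrow> real" and \<eta> :: real
  assumes "\<forall>x\<in>{0..1}. (L has_real_derivative L' x) (at x within {0..1})"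
      and "continuous_on {0..1} L'"
  shows "(\<lambda>\<tau>. variance_under logistic_measure (gs_estimator L \<tau> \<eta>))
           \<in> O[at_right 0](\<lambda>\<tau>. 1 / \<tau>)"
proof -
  obtain B where B: "\<And>x. x \<in> {0..1} \<Longrightarrow> \<bar>L' x\<bar> \<le> B"
    using compact_imp_bounded[OF compact_continuous_image[OF assms(2) compact_Icc]]
    unfolding bounded_iff by force
  have L_deriv: "(L has_real_derivative L' s) (at s)" if "s \<in> {0<..<1}" for s
    using assms(1)[rule_format, of s] that at_within_Icc_at[of 0 s 1] by auto
  have "eventually (\<lambda>\<tau>::real. 0 < \<tau>) (at_right 0)"
    by (simp add: eventually_at_filter)
  then show ?thesis
    using variance_gs_estimator_le[OF _ L_deriv assms(2) B] variance_under_nonneg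
    by (intro bigoI[where c = "B\<^sup>2 / 16"]) (auto elim!: eventually_mono)
qed

end
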